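(* Let $m\ge2$ be an integer, $q\ge\frac2m$, let $E_1,\dots,E_m,F$ be Banach spaces and $T\in\mathcal{L}(E_1,\dots,E_m;F)$. If $T$ has multi-cotype $q$, then $T$ has cotype $q$.
   Context: $r_j$ is the $j$-th Rademacher function and for finitely many vectors $x_1,\dots,x_n$ in a Banach space $E$, $\|(x_j)_{j=1}^n\|_{Rad(E)}=\left(\int_0^1\|\sum_{j=1}^n r_j(t)x_j\|^2dt\right)^{1/2}$. $T$ has multi-cotype $q$ if there is $C>0$ such that for all $n_1,\dots,n_m$ and all $x^{(i)}_1,\dots,x^{(i)}_{n_i}\in E_i$, $\left(\sum_{j_1,\dots,j_m=1}^{n_1,\dots,n_m}\|T(x^{(1)}_{j_1},\dots,x^{(m)}_{j_m})\|^q\right)^{1/q}\le C\prod_{i=1}^m\|(x^{(i)}_j)_{j=1}^{n_i}\|_{Rad(E_i)}$. $T$ has cotype $q$ (in the sense of Botelho–Campos) if there is $C>0$ such that for all $n$ and all $x^{(i)}_1,\dots,x^{(i)}_n\in E_i$, $\left(\sum_{j=1}^{n}\|T(x^{(1)}_{j},\dots,x^{(m)}_{j})\|^q\right)^{1/q}\le C\prod_{i=1}^m\|(x^{(i)}_j)_{j=1}^{n}\|_{Rad(E_i)}$. *)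

theory Defs
  imports "HOL-Analysis.Analysis"
begin

definition rademacher :: "nat \<Rightarrow> real \<Rightarrow> real" where
  "rademacher j t = sgn (sin (2 ^ j * pi * t))"

definition rad_norm :: "nat \<Rightarrow> (nat \<Rightarrow> 'a::real_normed_vector) \<Rightarrow> real" where
  "rad_norm n x =
     sqrt (integral {0..1} (\<lambda>t. (norm (\<Sum>j=1..n. rademacher j t *\<^sub>R x j))\<^sup>2))"

text \<open>The Banach spaces E_1..E_m are modelled as closed linear subspaces E 0, ..., E (m-1)
  of one Banach type; m-tuples are elements of PiE {..<m} E.\<close>
definition banach_family :: "nat \<Rightarrow> (nat \<Rightarrow> 'a::banach set) \<Rightarrow> bool" where
  "banach_family m E \<longleftrightarrow> (\<forall>i<m. subspace (E i) \<and> closed (E i))"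

definition bounded_multilinear ::
  "nat \<Rightarrow> (nat \<Rightarrow> 'a::real_normed_vector set) \<Rightarrow> ((nat \<Rightarrow> 'a) \<Rightarrow> 'b::real_normed_vector) \<Rightarrow> bool" where
  "bounded_multilinear m E T \<longleftrightarrow>
     (\<forall>x\<in>PiE {..<m} E. \<forall>i<m. \<forall>u\<in>E i. \<forall>v\<in>E i. \<forall>a b::real.
        T (x(i := a *\<^sub>R u + b *\<^sub>R v)) = a *\<^sub>R T (x(i := u)) + b *\<^sub>R T (x(i := v))) \<and>
     (\<exists>C. \<forall>x\<in>PiE {..<m} E. norm (T x) \<le> C * (\<Prod>i<m. norm (x i)))"

text \<open>Multi-cotype q. Index i ranges over {..<m} (i.e. E_{i+1}), j over {1..n i}.\<close>
definition has_multi_cotype ::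
  "nat \<Rightarrow> (nat \<Rightarrow> 'a::real_normed_vector set) \<Rightarrow> ((nat \<Rightarrow> 'a) \<Rightarrow> 'b::real_normed_vector) \<Rightarrow> real \<Rightarrow> bool" where
  "has_multi_cotype m E T q \<longleftrightarrow>
     (\<exists>C>0. \<forall>(n::nat \<Rightarrow> nat) (x::nat \<Rightarrow> nat \<Rightarrow> 'a).
        (\<forall>i<m. \<forall>j\<in>{1..n i}. x i j \<in> E i) \<longrightarrow>
        (\<Sum>js\<in>PiE {..<m} (\<lambda>i. {1..n i}). norm (T (restrict (\<lambda>i. x i (js i)) {..<m})) powr q)
           powr (1 / q)
        \<le> C * (\<Prod>i<m. rad_norm (n i) (x i)))"

text \<open>Cotype q in the sense of Botelho--Campos.\<close>
definition has_cotype_mult ::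
  "nat \<Rightarrow> (nat \<Rightarrow> 'a::real_normed_vector set) \<Rightarrow> ((nat \<Rightarrow> 'a) \<Rightarrow> 'b::real_normed_vector) \<Rightarrow> real \<Rightarrow> bool" where
  "has_cotype_mult m E T q \<longleftrightarrow>
     (\<exists>C>0. \<forall>(n::nat) (x::nat \<Rightarrow> nat \<Rightarrow> 'a).
        (\<forall>i<m. \<forall>j\<in>{1..n}. x i j \<in> E i) \<longrightarrow>
        (\<Sum>j=1..n. norm (T (restrict (\<lambda>i. x i j) {..<m})) powr q) powr (1 / q)
        \<le> C * (\<Prod>i<m. rad_norm n (x i)))"

end

theory Submission
  imports Defs
begin

text \<open>Taking all n_i equal to n, the sum in the definition of cotype is the diagonal part
  of the sum in the definition of multi-cotype, so it is dominated by it; since t \<mapsto> t powr (1/q)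
  is monotone for q > 0, the multi-cotype constant works.\<close>

lemma inj_on_constant_restrict:
  assumes "I \<noteq> {}"
  shows "inj_on (\<lambda>j. \<lambda>i\<in>I. j) A"
proof (rule inj_onI)
  fix a b assume "(\<lambda>i\<in>I. a) = (\<lambda>i\<in>I. b)"
  moreover obtain i where "i \<in> I" using assms by blast
  ultimately show "a = b" by (metis restrict_apply')
qed

lemma sum_diagonal_le_sum_PiE:
  fixes f :: "('i \<Rightarrow> 'j) \<Rightarrow> 'a::ordered_comm_monoid_add"
  assumes "finite I" "I \<noteq> {}" "finite A"
    and "\<And>js. js \<in> PiE I (\<lambda>_. A) \<Longrightarrow> 0 \<le> f js"
  shows "(\<Sum>j\<in>A. f (\<lambda>i\<in>I. j)) \<le> (\<Sum>js\<in>PiE I (\<lambda>_. A). f js)"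
proof -
  have "(\<Sum>j\<in>A. f (\<lambda>i\<in>I. j)) = sum f ((\<lambda>j. \<lambda>i\<in>I. j) ` A)"
    by (simp add: sum.reindex inj_on_constant_restrict[OF \<open>I \<noteq> {}\<close>])
  also have "\<dots> \<le> sum f (PiE I (\<lambda>_. A))"
    by (rule sum_mono2) (use assms in \<open>auto simp: finite_PiE\<close>)
  finally show ?thesis .
qed

lemma has_multi_cotype_imp_has_cotype_mult:
  fixes E :: "nat \<Rightarrow> 'a::real_normed_vector set"
    and T :: "(nat \<Rightarrow> 'a) \<Rightarrow> 'b::real_normed_vector"
  assumes "m > 0" "q > 0" "has_multi_cotype m E T q"
  shows "has_cotype_mult m E T q"
proof -
  obtain C where "C > 0" and multi: "\<And>(n::nat \<Rightarrow> nat) (x::nat \<Rightarrow> nat \<Rightarrow> 'a).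
        (\<forall>i<m. \<forall>j\<in>{1..n i}. x i j \<in> E i) \<Longrightarrow>
        (\<Sum>js\<in>PiE {..<m} (\<lambda>i. {1..n i}). norm (T (restrict (\<lambda>i. x i (js i)) {..<m})) powr q)
           powr (1 / q)
        \<le> C * (\<Prod>i<m. rad_norm (n i) (x i))"
    using assms(3) unfolding has_multi_cotype_def by blast
  show ?thesis
    unfolding has_cotype_mult_def
  proof (intro exI[of _ C] conjI \<open>C > 0\<close> allI impI)
    fix n :: nat and x :: "nat \<Rightarrow> nat \<Rightarrow> 'a"
    assume "\<forall>i<m. \<forall>j\<in>{1..n}. x i j \<in> E i"
    define f where "f js = norm (T (restrict (\<lambda>i. x i (js i)) {..<m})) powr q" for js
    have f_diagonal: "f (\<lambda>i\<in>{..<m}. j) = norm (T (restrict (\<lambda>i. x i j) {..<m})) powr q" for j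
    proof -
      have "(\<lambda>i\<in>{..<m}. x i ((\<lambda>i\<in>{..<m}. j) i)) = (\<lambda>i\<in>{..<m}. x i j)"
        by (rule restrict_ext) simp
      then show ?thesis unfolding f_def by simp
    qed
    have "(\<Sum>j=1..n. f (\<lambda>i\<in>{..<m}. j)) \<le> (\<Sum>js\<in>PiE {..<m} (\<lambda>_. {1..n}). f js)"
      using \<open>m > 0\<close> by (intro sum_diagonal_le_sum_PiE) (auto simp: f_def)
    then have "(\<Sum>j=1..n. norm (T (restrict (\<lambda>i. x i j) {..<m})) powr q) powr (1 / q)
        \<le> (\<Sum>js\<in>PiE {..<m} (\<lambda>_. {1..n}). f js) powr (1 / q)"
      using \<open>q > 0\<close> by (intro powr_mono2) (simp_all add: f_diagonal sum_nonneg)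
    also have "\<dots> \<le> C * (\<Prod>i<m. rad_norm n (x i))"
      using multi[of "\<lambda>_. n" x] \<open>\<forall>i<m. \<forall>j\<in>{1..n}. x i j \<in> E i\<close> unfolding f_def by blast
    finally show "(\<Sum>j=1..n. norm (T (restrict (\<lambda>i. x i j) {..<m})) powr q) powr (1 / q)
        \<le> C * (\<Prod>i<m. rad_norm n (x i))" .
  qed
qed

theorem mainTheorem11:
  fixes m :: nat and q :: real
    and E :: "nat \<Rightarrow> 'a::banach set"
    and T :: "(nat \<Rightarrow> 'a) \<Rightarrow> 'b::banach"
  assumes "m \<ge> 2"
    and "q \<ge> 2 / real m"
    and "banach_family m E"
    and "bounded_multilinear m E T"
    and "has_multi_cotype m E T q"
  shows "has_cotype_mult m E T q"
proof (rule has_multi_cotype_imp_has_cotype_mult)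
  show "m > 0" using \<open>m \<ge> 2\<close> by simp
  have "2 / real m > 0" using \<open>m \<ge> 2\<close> by simp
  then show "q > 0" using \<open>q \<ge> 2 / real m\<close> by linarith
  show "has_multi_cotype m E T q" by fact
qed

end
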